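(* For every CABA framework $F_c$, $\mathit{GrCInst}(\mathit{CArg})=\mathit{Arg}_c$ modulo ground constraints; that is, every ground constrained instance of a constrained argument of $F_c$ is equal modulo ground constraints to some argument of $\mathit{Ground}(F_c)$, and every argument of $\mathit{Ground}(F_c)$ is equal modulo ground constraints to some ground constrained instance of a constrained argument of $F_c$.
   Context: Conventions. $\mathsf X$: tuple of variables; $\mathsf t$: tuple of terms. A substitution $\vartheta=\{X_1/t_1,\dots,X_n/t_n\}$ maps distinct variables to terms; $e\vartheta$ replaces each $X_i$ by $t_i$; $\{\mathsf X/\mathsf t\}$ maps $\mathsf X$ componentwise to $\mathsf t$. An object is ground if it has no variables; $\vartheta$ is grounding for $e$ if $e\vartheta$ is ground. Theory of constraints. $\mathcal{CT}$ is a first-order theory with equality (identity on its domain, including the Clark Equality Theory) whose atomic formulas form the set $\mathcal C$ of constraints; a finite set $\{c_1,\dots,c_n\}\subseteq\mathcal C$ is consistent if $\mathcal{CT}\models\exists(c_1\wedge\dots\wedge c_n)$. CABA framework $F_c=\langle\mathcal L_c,\mathcal C,\mathcal R,\mathcal{CT},\mathcal A,\overline{\cdot}\rangle$: $\mathcal L_c$ a set of atoms; $\mathcal C\subseteq\mathcal L_c$ the constraints; $\mathcal R$ rules $s_0\leftarrow s_1,\dots,s_m$ ($s_0\in\mathcal L_c\setminus\mathcal C$, $s_i\in\mathcal L_c$) in normalised form $p(\mathsf X_0)\leftarrow C,p_1(\mathsf X_1),\dots,p_m(\mathsf X_m)$ ($C\subseteq\mathcal C$, each $\mathsf X_i$ a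 tuple of distinct variables); $\mathcal A\subseteq\mathcal L_c\setminus\mathcal C$ nonempty assumptions, not heads of rules; $\overline\cdot:\mathcal A\to\mathcal L_c\setminus\mathcal C$ total with $\overline{p(\mathsf t)}=cp(\mathsf t)$ for a fixed predicate $cp$ per assumption predicate $p$; $\mathcal L_c,\mathcal C,\mathcal A$ predicate closed. Constrained arguments. A tight constrained argument $C\cup A\vdash_R s$ (consistent $C\subseteq\mathcal C$, $A\subseteq\mathcal A$, $R\subseteq\mathcal R$, $s\in\mathcal L_c\setminus\mathcal C$) is a finite tree with root $s$, each non-leaf node $p(\mathsf t)$ having as children exactly $s_1\vartheta,\dots,s_m\vartheta$ for exactly one renamed-apart copy $p(\mathsf X)\leftarrow s_1,\dots,s_m$ of a rule of $R$ with $\vartheta=\{\mathsf X/\mathsf t\}$ (or the single child true for a fact), each leaf a constraint of $C$, an assumption of $A$ or true; $C,A,R$ are exactly those occurring/used. A constrained argument is $C\vartheta\cup D\cup A\vartheta\vdash_R s\vartheta$ for some tight $C\cup A\vdash_R s$, substitution $\vartheta$ and $D\subseteq\mathcal C$ with $C\vartheta\cup D$ consistent; a constrained instance of a constrained argument $C\cup A\vdash_R s$ (via $\vartheta$, $D$) is $C\vartheta\cup D\cup A\vartheta\vdash_R s\vartheta$ with $C\vartheta\cup D$ consistent. $\mathit{CArg}$: set of all constrained arguments; $\mathit{GrCInst}(\alpha)$: ground constrained instances of $\alpha$; $\mathit{GrCInst}(\Gamma)=\bigcup_{\alpha\in\Gamma}\mathit{GrCInst}(\alpha)$. ABA and grounding.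 An argument $A\vdash_R s$ of an ABA framework $\langle\mathcal L,\mathcal R,\mathcal A,\overline\cdot\rangle$ is a finite tree with root $s$, each non-leaf node $s'$ having as children exactly the body elements of one rule of $R$ with head $s'$ (or the single child true for a fact), each leaf an assumption in $A$ or true. $\mathit{Ground}(F_c)=\langle\mathcal L_{cg},\mathcal R_g,\mathcal A_g,\overline\cdot\rangle$: $\mathcal L_{cg}$ the ground atoms of $\mathcal L_c$; $\mathcal R_g$ all ground instances of rules of $\mathcal R$ plus the facts $c\leftarrow$ for ground $c\in\mathcal C$ with $\mathcal{CT}\models c$; $\mathcal A_g$ the ground assumptions; contraries inherited. $\mathit{Arg}_c$ is the set of all arguments of $\mathit{Ground}(F_c)$. Equality modulo ground constraints. For ground atoms, $\mathcal{CT}\models p(\mathsf t)\leftrightarrow p(\mathsf t')$ means $\mathcal{CT}\models\mathsf t=\mathsf t'$; for ground sets of atoms $A,A'$, $\mathcal{CT}\models\bigwedge A\leftrightarrow\bigwedge A'$ means every atom of each set is so equivalent to some atom of the other. Two ground arguments with (non-constraint) assumption sets $A,A'$ and claims $s,s'$ are equal modulo ground constraints if $\mathcal{CT}\models\bigwedge A\leftrightarrow\bigwedge A'$ and $\mathcal{CT}\models s\leftrightarrow s'$ (ground constraints in the supports are disregarded). *)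

theory Defs
  imports Main
begin

datatype ('f,'v) trm = Var 'v | Fn 'f "('f,'v) trm list"

datatype ('p,'f,'v) atm = Atm 'p "('f,'v) trm list"

primrec tvars :: "('f,'v) trm \<Rightarrow> 'v set" where
  "tvars (Var x) = {x}"
| "tvars (Fn f ts) = \<Union> (set (map tvars ts))"

primrec tsubst :: "('v \<Rightarrow> ('f,'v) trm) \<Rightarrow> ('f,'v) trm \<Rightarrow> ('f,'v) trm" where
  "tsubst \<sigma> (Var x) = \<sigma> x"
| "tsubst \<sigma> (Fn f ts) = Fn f (map (tsubst \<sigma>) ts)"

fun pred :: "('p,'f,'v) atm \<Rightarrow> 'p" where "pred (Atm p ts) = p"
fun args :: "('p,'f,'v) atm \<Rightarrow> ('f,'v) trm list" where "args (Atm p ts) = ts"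

fun avars :: "('p,'f,'v) atm \<Rightarrow> 'v set" where
  "avars (Atm p ts) = \<Union> (set (map tvars ts))"

fun asubst :: "('v \<Rightarrow> ('f,'v) trm) \<Rightarrow> ('p,'f,'v) atm \<Rightarrow> ('p,'f,'v) atm" where
  "asubst \<sigma> (Atm p ts) = Atm p (map (tsubst \<sigma>) ts)"

definition ground_atm :: "('p,'f,'v) atm \<Rightarrow> bool" where
  "ground_atm a \<longleftrightarrow> avars a = {}"

text \<open>A rule s0 <- s1,...,sm is a pair (head, body list).\<close>
type_synonym ('p,'f,'v) rule = "('p,'f,'v) atm \<times> ('p,'f,'v) atm list"

section \<open>Semantics of the constraint theory CT (given by its class of models)\<close>

text \<open>A model: interpretation of function symbols and of predicate symbols over a domain 'd.\<close>
type_synonym ('p,'f,'d) model = "('f \<Rightarrow> 'd list \<Rightarrow> 'd) \<times> ('p \<Rightarrow> 'd list \<Rightarrow> bool)"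

primrec teval :: "('f \<Rightarrow> 'd list \<Rightarrow> 'd) \<Rightarrow> ('v \<Rightarrow> 'd) \<Rightarrow> ('f,'v) trm \<Rightarrow> 'd" where
  "teval F \<sigma> (Var x) = \<sigma> x"
| "teval F \<sigma> (Fn f ts) = F f (map (teval F \<sigma>) ts)"

fun asat :: "('p,'f,'d) model \<Rightarrow> ('v \<Rightarrow> 'd) \<Rightarrow> ('p,'f,'v) atm \<Rightarrow> bool" where
  "asat (F, P) \<sigma> (Atm p ts) = P p (map (teval F \<sigma>) ts)"

text \<open>Consistency of a finite set of constraints: CT entails the existential closure of its conjunction.\<close>
definition ct_consistent :: "('p,'f,'d) model set \<Rightarrow> ('p,'f,'v) atm set \<Rightarrow> bool" where
  "ct_consistent CT S \<longleftrightarrow> finite S \<and> (\<forall>M\<in>CT. \<exists>\<sigma>. \<forall>c\<in>S. asat M \<sigma> c)"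

definition ct_entails :: "('p,'f,'d) model set \<Rightarrow> ('p,'f,'v) atm \<Rightarrow> bool" where
  "ct_entails CT c \<longleftrightarrow> (\<forall>M\<in>CT. \<forall>\<sigma>. asat M \<sigma> c)"

text \<open>CT entails p(t) <-> p(t'), i.e. CT entails t = t' (componentwise).\<close>
definition ct_atm_equiv :: "('p,'f,'d) model set \<Rightarrow> ('p,'f,'v) atm \<Rightarrow> ('p,'f,'v) atm \<Rightarrow> bool" where
  "ct_atm_equiv CT a b \<longleftrightarrow> pred a = pred b \<and> length (args a) = length (args b) \<and>
     (\<forall>M\<in>CT. \<forall>\<sigma>. map (teval (fst M) \<sigma>) (args a) = map (teval (fst M) \<sigma>) (args b))"

definition ct_set_equiv :: "('p,'f,'d) model set \<Rightarrow> ('p,'f,'v) atm set \<Rightarrow> ('p,'f,'v) atm set \<Rightarrow> bool" where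
  "ct_set_equiv CT A B \<longleftrightarrow> (\<forall>a\<in>A. \<exists>b\<in>B. ct_atm_equiv CT a b) \<and> (\<forall>b\<in>B. \<exists>a\<in>A. ct_atm_equiv CT a b)"

text \<open>Equality modulo ground constraints of two ground arguments with (non-constraint)
  assumption sets A, A' and claims s, s'.\<close>
definition eq_mod_gc :: "('p,'f,'d) model set \<Rightarrow> ('p,'f,'v) atm set \<Rightarrow> ('p,'f,'v) atm
     \<Rightarrow> ('p,'f,'v) atm set \<Rightarrow> ('p,'f,'v) atm \<Rightarrow> bool" where
  "eq_mod_gc CT A s A' s' \<longleftrightarrow> ct_set_equiv CT A A' \<and> ct_atm_equiv CT s s'"

definition eq_model :: "'p \<Rightarrow> ('p,'f,'d) model \<Rightarrow> bool" where
  "eq_model eqp M \<longleftrightarrow> (\<forall>ds. snd M eqp ds \<longleftrightarrow> (\<exists>d. ds = [d, d]))"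

definition cet_model :: "('p,'f,'d) model \<Rightarrow> bool" where
  "cet_model M \<longleftrightarrow>
     (\<forall>f g ds es. fst M f ds = fst M g es \<longrightarrow> f = g \<and> ds = es) \<and>
     (\<forall>(\<sigma>::nat \<Rightarrow> 'd) (t::('f,nat) trm) x. x \<in> tvars t \<and> t \<noteq> Var x \<longrightarrow> teval (fst M) \<sigma> t \<noteq> \<sigma> x)"

definition pred_closed :: "('p,'f,'v) atm set \<Rightarrow> bool" where
  "pred_closed S \<longleftrightarrow> (\<forall>p ts ts'. Atm p ts \<in> S \<longrightarrow> length ts' = length ts \<longrightarrow> Atm p ts' \<in> S)"

definition normalised :: "('p,'f,'v) atm set \<Rightarrow> ('p,'f,'v) rule \<Rightarrow> bool" where
  "normalised Cs r \<longleftrightarrow>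
     (\<exists>p xs. fst r = Atm p (map Var xs) \<and> distinct xs) \<and>
     (\<forall>a\<in>set (snd r). a \<notin> Cs \<longrightarrow> (\<exists>q ys. a = Atm q (map Var ys) \<and> distinct ys))"

fun contrary :: "('p \<Rightarrow> 'p) \<Rightarrow> ('p,'f,'v) atm \<Rightarrow> ('p,'f,'v) atm" where
  "contrary cp (Atm p ts) = Atm (cp p) ts"

text \<open>F_c = (Lc, Cs, R, CT, Asm, contrary cp); eqp is the equality predicate of CT.\<close>
definition caba_framework :: "('p,'f,'v) atm set \<Rightarrow> ('p,'f,'v) atm set \<Rightarrow> ('p,'f,'v) rule set
     \<Rightarrow> ('p,'f,'d) model set \<Rightarrow> ('p,'f,'v) atm set \<Rightarrow> ('p \<Rightarrow> 'p) \<Rightarrow> 'p \<Rightarrow> bool" where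
  "caba_framework Lc Cs R CT Asm cp eqp \<longleftrightarrow>
     pred_closed Lc \<and> pred_closed Cs \<and> pred_closed Asm \<and>
     Cs \<subseteq> Lc \<and> Asm \<subseteq> Lc - Cs \<and> Asm \<noteq> {} \<and>
     (\<forall>x y. Atm eqp [Var x, Var y] \<in> Cs) \<and>
     (\<forall>M\<in>CT. eq_model eqp M \<and> cet_model M) \<and>
     (\<forall>r\<in>R. fst r \<in> Lc - Cs \<and> set (snd r) \<subseteq> Lc \<and> fst r \<notin> Asm \<and> normalised Cs r) \<and>
     (\<forall>a\<in>Asm. contrary cp a \<in> Lc - Cs)"

text \<open>Nodes: the leaf true, a leaf atom, or an atom expanded by a rule (annotated with the rule used).\<close>
datatype ('a,'r) dtree = DTrue | DLeaf 'a | DNode 'a 'r "('a,'r) dtree list"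

fun dlabel :: "('a,'r) dtree \<Rightarrow> 'a option" where
  "dlabel DTrue = None"
| "dlabel (DLeaf a) = Some a"
| "dlabel (DNode a r ts) = Some a"

primrec dleaves :: "('a,'r) dtree \<Rightarrow> 'a set" where
  "dleaves DTrue = {}"
| "dleaves (DLeaf a) = {a}"
| "dleaves (DNode a r ts) = \<Union> (set (map dleaves ts))"

primrec drules :: "('a,'r) dtree \<Rightarrow> 'r set" where
  "drules DTrue = {}"
| "drules (DLeaf a) = {}"
| "drules (DNode a r ts) = insert r (\<Union> (set (map drules ts)))"

fun lvars :: "('p,'f,'v) atm option \<Rightarrow> 'v set" where
  "lvars None = {}"
| "lvars (Some a) = avars a"

text \<open>Variables introduced (by the renamed-apart rule copy) at each internal node, in preorder.\<close>
primrec dintros :: "(('p,'f,'v) atm, 'r) dtree \<Rightarrow> 'v set list" where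
  "dintros DTrue = []"
| "dintros (DLeaf a) = []"
| "dintros (DNode a r ts) = (\<Union> (set (map (lvars \<circ> dlabel) ts)) - avars a) # concat (map dintros ts)"

text \<open>Node a = p(t) expanded with a renamed-apart copy of rule r = p(X) <- body:
  sigma maps the head variables X to t and renames the body-only variables
  injectively to fresh variables (not occurring in a); children = body under sigma.\<close>
definition rule_step :: "('p,'f,'v) rule \<Rightarrow> ('p,'f,'v) atm \<Rightarrow> ('p,'f,'v) atm option list \<Rightarrow> bool" where
  "rule_step r a labs \<longleftrightarrow>
     (\<exists>p xs ts \<sigma>. fst r = Atm p (map Var xs) \<and> a = Atm p ts \<and> length ts = length xs \<and>
        (\<forall>i<length xs. \<sigma> (xs ! i) = ts ! i) \<and>
        (let Y = \<Union> (set (map avars (snd r))) - set xs in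
           (\<forall>y\<in>Y. \<exists>z. \<sigma> y = Var z) \<and> inj_on \<sigma> Y \<and> (\<Union>y\<in>Y. tvars (\<sigma> y)) \<inter> avars a = {}) \<and>
        labs = (if snd r = [] then [None] else map (\<lambda>c. Some (asubst \<sigma> c)) (snd r)))"

fun tight_wf :: "('p,'f,'v) rule set \<Rightarrow> ('p,'f,'v) atm set \<Rightarrow> ('p,'f,'v) atm set
     \<Rightarrow> (('p,'f,'v) atm, ('p,'f,'v) rule) dtree \<Rightarrow> bool" where
  "tight_wf R Cs Asm DTrue = True"
| "tight_wf R Cs Asm (DLeaf a) = (a \<in> Cs \<or> a \<in> Asm)"
| "tight_wf R Cs Asm (DNode a r ts) =
     (r \<in> R \<and> rule_step r a (map dlabel ts) \<and> (\<forall>t\<in>set ts. tight_wf R Cs Asm t))"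

definition renamed_apart :: "(('p,'f,'v) atm, 'r) dtree \<Rightarrow> bool" where
  "renamed_apart T \<longleftrightarrow> (let I = dintros T in
     (\<forall>i<length I. \<forall>j<length I. i \<noteq> j \<longrightarrow> I ! i \<inter> I ! j = {}) \<and>
     (\<forall>i<length I. I ! i \<inter> lvars (dlabel T) = {}))"

text \<open>Constrained arguments are represented as (C, A, Rs, s) standing for C \<union> A \<turnstile>_Rs s.\<close>
type_synonym ('p,'f,'v) carg =
  "('p,'f,'v) atm set \<times> ('p,'f,'v) atm set \<times> ('p,'f,'v) rule set \<times> ('p,'f,'v) atm"

definition tight_arg :: "('p,'f,'v) atm set \<Rightarrow> ('p,'f,'v) atm set \<Rightarrow> ('p,'f,'v) rule set
     \<Rightarrow> ('p,'f,'d) model set \<Rightarrow> ('p,'f,'v) atm set \<Rightarrow> ('p,'f,'v) carg \<Rightarrow> bool" where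
  "tight_arg Lc Cs R CT Asm \<alpha> \<longleftrightarrow> (case \<alpha> of (C, A, Rs, s) \<Rightarrow>
     (\<exists>T. T \<noteq> DTrue \<and> tight_wf R Cs Asm T \<and> renamed_apart T \<and> dlabel T = Some s \<and>
          s \<in> Lc - Cs \<and> C = dleaves T \<inter> Cs \<and> A = dleaves T \<inter> Asm \<and> Rs = drules T \<and>
          ct_consistent CT C))"

text \<open>Constrained instances Cth \<union> D \<union> Ath \<turnstile>_Rs sth of a constrained argument.\<close>
definition c_inst :: "('p,'f,'v) atm set \<Rightarrow> ('p,'f,'d) model set \<Rightarrow> ('p,'f,'v) carg \<Rightarrow> ('p,'f,'v) carg set" where
  "c_inst Cs CT \<alpha> = (case \<alpha> of (C, A, Rs, s) \<Rightarrow>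
     {(asubst th ` C \<union> D, asubst th ` A, Rs, asubst th s) | th D.
        D \<subseteq> Cs \<and> ct_consistent CT (asubst th ` C \<union> D)})"

definition c_args :: "('p,'f,'v) atm set \<Rightarrow> ('p,'f,'v) atm set \<Rightarrow> ('p,'f,'v) rule set
     \<Rightarrow> ('p,'f,'d) model set \<Rightarrow> ('p,'f,'v) atm set \<Rightarrow> ('p,'f,'v) carg set" where
  "c_args Lc Cs R CT Asm = \<Union> {c_inst Cs CT \<alpha> | \<alpha>. tight_arg Lc Cs R CT Asm \<alpha>}"

definition ground_carg :: "('p,'f,'v) carg \<Rightarrow> bool" where
  "ground_carg \<alpha> \<longleftrightarrow> (case \<alpha> of (C, A, Rs, s) \<Rightarrow>
     (\<forall>c\<in>C. ground_atm c) \<and> (\<forall>a\<in>A. ground_atm a) \<and> ground_atm s)"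

definition gr_c_inst :: "('p,'f,'v) atm set \<Rightarrow> ('p,'f,'d) model set \<Rightarrow> ('p,'f,'v) carg set \<Rightarrow> ('p,'f,'v) carg set" where
  "gr_c_inst Cs CT \<Gamma> = (\<Union>\<alpha>\<in>\<Gamma>. {\<beta> \<in> c_inst Cs CT \<alpha>. ground_carg \<beta>})"

definition ground_rules :: "('p,'f,'v) atm set \<Rightarrow> ('p,'f,'v) rule set \<Rightarrow> ('p,'f,'d) model set
     \<Rightarrow> ('p,'f,'v) rule set" where
  "ground_rules Cs R CT =
     {(asubst \<sigma> h, map (asubst \<sigma>) b) | h b \<sigma>. (h, b) \<in> R \<and> ground_atm (asubst \<sigma> h) \<and>
          (\<forall>c\<in>set b. ground_atm (asubst \<sigma> c))}
     \<union> {(c, []) | c. c \<in> Cs \<and> ground_atm c \<and> ct_entails CT c}"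

definition ground_asms :: "('p,'f,'v) atm set \<Rightarrow> ('p,'f,'v) atm set" where
  "ground_asms Asm = {a \<in> Asm. ground_atm a}"

fun aba_wf :: "('a \<times> 'a list) set \<Rightarrow> 'a set \<Rightarrow> ('a, 'a \<times> 'a list) dtree \<Rightarrow> bool" where
  "aba_wf Rg Ag DTrue = True"
| "aba_wf Rg Ag (DLeaf a) = (a \<in> Ag)"
| "aba_wf Rg Ag (DNode a r ts) =
     (r \<in> Rg \<and> fst r = a \<and> map dlabel ts = (if snd r = [] then [None] else map Some (snd r)) \<and>
      (\<forall>t\<in>set ts. aba_wf Rg Ag t))"

text \<open>ABA arguments A \<turnstile>_Rs s, represented as (A, Rs, s).\<close>
definition aba_args :: "('a \<times> 'a list) set \<Rightarrow> 'a set \<Rightarrow> ('a set \<times> ('a \<times> 'a list) set \<times> 'a) set" where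
  "aba_args Rg Ag = {(dleaves T, drules T, s) | T s. T \<noteq> DTrue \<and> aba_wf Rg Ag T \<and> dlabel T = Some s}"

definition arg_c :: "('p,'f,'v) atm set \<Rightarrow> ('p,'f,'v) rule set \<Rightarrow> ('p,'f,'d) model set
     \<Rightarrow> ('p,'f,'v) atm set \<Rightarrow> (('p,'f,'v) atm set \<times> ('p,'f,'v) rule set \<times> ('p,'f,'v) atm) set" where
  "arg_c Cs R CT Asm = aba_args (ground_rules Cs R CT) (ground_asms Asm)"

end

theory Submission
  imports Defs "HOL-Library.Nat_Bijection"
begin

(* A ground instance of a tight argument becomes an
   argument of the grounding by instantiating every rule application (variables that the
   instance leaves open go to an arbitrary ground term); its constraint leaves are ground and
   entailed by CT, so each is derived there by its fact c <-.  Conversely, an argument of the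
   grounding is lifted node by node to a tight argument: each ground rule instance is replaced
   by a copy of its rule renamed apart with fresh variables indexed by the address of the node
   (this needs infinitely many variables), fact nodes for constraints become constraint leaves,
   and a substitution mapping the copy back onto the ground tree is built alongside.  In both
   directions the assumptions and the claim coincide exactly, so equality modulo ground
   constraints holds trivially. *)

lemma tsubst_tsubst: "tsubst \<sigma> (tsubst \<tau> t) = tsubst (tsubst \<sigma> \<circ> \<tau>) t"
  by (induction t) auto

lemma asubst_asubst: "asubst \<sigma> (asubst \<tau> a) = asubst (tsubst \<sigma> \<circ> \<tau>) a"
  by (cases a) (auto simp: tsubst_tsubst)

lemma tvars_tsubst: "tvars (tsubst \<sigma> t) = (\<Union>x\<in>tvars t. tvars (\<sigma> x))"
  by (induction t) auto

lemma avars_asubst: "avars (asubst \<sigma> a) = (\<Union>x\<in>avars a. tvars (\<sigma> x))"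
  by (cases a) (auto simp: tvars_tsubst)

lemma tsubst_cong: "(\<And>x. x \<in> tvars t \<Longrightarrow> \<sigma> x = \<tau> x) \<Longrightarrow> tsubst \<sigma> t = tsubst \<tau> t"
  by (induction t) auto

lemma asubst_cong: "(\<And>x. x \<in> avars a \<Longrightarrow> \<sigma> x = \<tau> x) \<Longrightarrow> asubst \<sigma> a = asubst \<tau> a"
  by (cases a) (auto intro: tsubst_cong)

lemma tsubst_Var: "tsubst Var t = t"
  by (induction t) (auto simp: map_idI)

lemma asubst_Var: "asubst Var = id"
proof
  fix a :: "('p,'f,'v) atm"
  show "asubst Var a = id a" by (cases a) (auto simp: tsubst_Var map_idI)
qed

lemma asubst_ground: "ground_atm a \<Longrightarrow> asubst \<sigma> a = a"
  using asubst_cong[of a \<sigma> Var] by (simp add: ground_atm_def asubst_Var)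

lemma ground_asubst: "(\<And>x. tvars (\<sigma> x) = {}) \<Longrightarrow> ground_atm (asubst \<sigma> a)"
  by (simp add: avars_asubst ground_atm_def)

lemma finite_tvars: "finite (tvars t)"
  by (induction t) auto

lemma finite_avars: "finite (avars a)"
  by (cases a) (auto simp: finite_tvars)

lemma pred_closed_asubst_iff: "pred_closed S \<Longrightarrow> asubst \<sigma> a \<in> S \<longleftrightarrow> a \<in> S"
  unfolding pred_closed_def by (cases a) (metis asubst.simps length_map)

lemma teval_tsubst: "teval F \<sigma> (tsubst \<theta> t) = teval F (teval F \<sigma> \<circ> \<theta>) t"
  by (induction t) (auto simp: comp_def intro!: arg_cong[where f="F _"] map_cong)

lemma asat_asubst: "asat M \<sigma> (asubst \<theta> a) = asat M (teval (fst M) \<sigma> \<circ> \<theta>) a"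
  by (cases M; cases a) (auto simp: teval_tsubst comp_def)

lemma teval_cong: "(\<And>x. x \<in> tvars t \<Longrightarrow> \<sigma> x = \<tau> x) \<Longrightarrow> teval F \<sigma> t = teval F \<tau> t"
  by (induction t) (auto intro!: arg_cong[where f="F _"] map_cong)

lemma asat_cong: "(\<And>x. x \<in> avars a \<Longrightarrow> \<sigma> x = \<tau> x) \<Longrightarrow> asat M \<sigma> a = asat M \<tau> a"
proof (cases M; cases a)
  fix F P p ts assume "\<And>x. x \<in> avars a \<Longrightarrow> \<sigma> x = \<tau> x" "M = (F, P)" "a = Atm p ts"
  then show ?thesis by (auto intro!: arg_cong[where f="P p"] map_cong teval_cong)
qed

lemma asat_ground: "ground_atm a \<Longrightarrow> asat M \<sigma> a = asat M \<tau> a"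
  by (rule asat_cong) (auto simp: ground_atm_def)

lemma ct_entails_if_consistent:
  "ct_consistent CT S \<Longrightarrow> c \<in> S \<Longrightarrow> ground_atm c \<Longrightarrow> ct_entails CT c"
  unfolding ct_consistent_def ct_entails_def using asat_ground by metis

lemma ct_consistent_if_entails:
  "finite S \<Longrightarrow> (\<And>c. c \<in> S \<Longrightarrow> ct_entails CT c) \<Longrightarrow> ct_consistent CT S"
  unfolding ct_consistent_def ct_entails_def by auto

lemma ct_consistent_if_instance:
  assumes "ct_consistent CT (asubst \<theta> ` S)" "finite S"
  shows "ct_consistent CT S"
  using assms unfolding ct_consistent_def by (metis asat_asubst image_eqI)

lemma eq_mod_gc_refl: "eq_mod_gc CT A s A s"
  unfolding eq_mod_gc_def ct_set_equiv_def ct_atm_equiv_def by blast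

lemma finite_dleaves: "finite (dleaves T)"
  by (induction T) auto

lemma dleaves_DNode_nth: "dleaves (DNode a r ts) = (\<Union>i<length ts. dleaves (ts ! i))"
  by (auto simp: in_set_conv_nth) (use nth_mem in blast)

lemma avars_dleaves_subset:
  "c \<in> dleaves T \<Longrightarrow> avars c \<subseteq> lvars (dlabel T) \<union> \<Union> (set (dintros T))"
proof (induction T)
  case (DNode a r ts)
  then obtain t where t: "t \<in> set ts" "c \<in> dleaves t" by auto
  define X where "X = \<Union> (set (map (lvars \<circ> dlabel) ts)) - avars a"
  have "lvars (dlabel t) \<subseteq> avars a \<union> X" and "X \<in> set (dintros (DNode a r ts))"
    using t(1) by (auto simp: X_def)
  moreover have "set (dintros t) \<subseteq> set (dintros (DNode a r ts))"
    using t(1) by auto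
  ultimately have "avars c \<subseteq> avars a \<union> \<Union> (set (dintros (DNode a r ts)))"
    using DNode.IH[OF t] by blast
  then show ?case by simp
qed auto

lemma map_dlabel_eq_None: "map dlabel ts = [None] \<Longrightarrow> ts = [DTrue]"
  by (cases ts) (auto elim: dlabel.elims)

lemma aba_wf_dleaves: "aba_wf Rg Ag T \<Longrightarrow> dleaves T \<subseteq> Ag"
  by (induction T) auto

lemma ground_rule_with_constraint_head:
  assumes "pred_closed Cs" "\<forall>r\<in>R. fst r \<notin> Cs" "r \<in> ground_rules Cs R CT" "fst r \<in> Cs"
  shows "snd r = [] \<and> ground_atm (fst r) \<and> ct_entails CT (fst r)"
  using assms unfolding ground_rules_def by (force simp: pred_closed_asubst_iff)

lemma ground_rule_with_rule_head:
  assumes "r \<in> ground_rules Cs R CT" "fst r \<notin> Cs"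
  shows "\<exists>h b \<sigma>. (h, b) \<in> R \<and> r = (asubst \<sigma> h, map (asubst \<sigma>) b)"
proof -
  have "r \<notin> {(c, []) | c. c \<in> Cs \<and> ground_atm c \<and> ct_entails CT c}"
    using assms(2) by auto
  then show ?thesis
    using assms(1) unfolding ground_rules_def by blast
qed

lemma aba_claim_ground_in_Lc:
  assumes "pred_closed Lc" "Cs \<subseteq> Lc" "Asm \<subseteq> Lc" "\<forall>r\<in>R. fst r \<in> Lc"
    and "aba_wf (ground_rules Cs R CT) (ground_asms Asm) T" "dlabel T = Some s"
  shows "ground_atm s \<and> s \<in> Lc"
  using assms by (cases T) (auto simp: ground_rules_def ground_asms_def pred_closed_asubst_iff)

lemma c_inst_trans:
  assumes pcC: "pred_closed Cs" and "\<beta> \<in> c_inst Cs CT \<gamma>" and "\<gamma> \<in> c_inst Cs CT \<alpha>"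
  shows "\<beta> \<in> c_inst Cs CT \<alpha>"
proof -
  obtain C A Rs s where \<alpha>: "\<alpha> = (C, A, Rs, s)" by (cases \<alpha>)
  from assms(3) obtain \<theta> D where D: "D \<subseteq> Cs"
    and \<gamma>: "\<gamma> = (asubst \<theta> ` C \<union> D, asubst \<theta> ` A, Rs, asubst \<theta> s)"
    unfolding c_inst_def \<alpha> by auto
  from assms(2) obtain \<theta>' D' where D': "D' \<subseteq> Cs"
    and \<beta>: "\<beta> = (asubst \<theta>' ` (asubst \<theta> ` C \<union> D) \<union> D', asubst \<theta>' ` asubst \<theta> ` A, Rs,
                asubst \<theta>' (asubst \<theta> s))"
    and cons: "ct_consistent CT (asubst \<theta>' ` (asubst \<theta> ` C \<union> D) \<union> D')"
    unfolding c_inst_def \<gamma> by auto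
  define \<phi> where "\<phi> = tsubst \<theta>' \<circ> \<theta>"
  define D'' where "D'' = asubst \<theta>' ` D \<union> D'"
  have "\<beta> = (asubst \<phi> ` C \<union> D'', asubst \<phi> ` A, Rs, asubst \<phi> s)"
    by (simp add: \<beta> \<phi>_def D''_def image_Un image_image asubst_asubst Un_assoc)
  moreover have "D'' \<subseteq> Cs"
    using D D' pred_closed_asubst_iff[OF pcC] by (auto simp: D''_def)
  moreover have "ct_consistent CT (asubst \<phi> ` C \<union> D'')"
    using cons by (simp add: \<phi>_def D''_def image_Un image_image asubst_asubst Un_assoc)
  ultimately show ?thesis
    unfolding c_inst_def \<alpha> by blast
qed

lemma c_inst_refl:
  assumes "\<beta> \<in> c_inst Cs CT \<alpha>"
  shows "\<beta> \<in> c_inst Cs CT \<beta>"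
proof -
  obtain C A Rs s where \<beta>: "\<beta> = (C, A, Rs, s)" by (cases \<beta>)
  have "ct_consistent CT C"
    using assms unfolding c_inst_def \<beta> by (cases \<alpha>) auto
  then show ?thesis
    unfolding \<beta> c_inst_def prod.case mem_Collect_eq
    by (intro exI[of _ Var] exI[of _ "{}"]) (simp add: asubst_Var)
qed

lemma mem_gr_c_inst_c_args:
  assumes "pred_closed Cs"
  shows "\<beta> \<in> gr_c_inst Cs CT (c_args Lc Cs R CT Asm) \<longleftrightarrow>
    ground_carg \<beta> \<and> (\<exists>\<alpha>. tight_arg Lc Cs R CT Asm \<alpha> \<and> \<beta> \<in> c_inst Cs CT \<alpha>)"
proof
  assume "\<beta> \<in> gr_c_inst Cs CT (c_args Lc Cs R CT Asm)"
  then obtain \<gamma> \<alpha> where "ground_carg \<beta>" "\<beta> \<in> c_inst Cs CT \<gamma>" "\<gamma> \<in> c_inst Cs CT \<alpha>"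
      "tight_arg Lc Cs R CT Asm \<alpha>"
    unfolding gr_c_inst_def c_args_def by blast
  then show "ground_carg \<beta> \<and> (\<exists>\<alpha>. tight_arg Lc Cs R CT Asm \<alpha> \<and> \<beta> \<in> c_inst Cs CT \<alpha>)"
    using c_inst_trans[OF assms] by blast
next
  assume "ground_carg \<beta> \<and> (\<exists>\<alpha>. tight_arg Lc Cs R CT Asm \<alpha> \<and> \<beta> \<in> c_inst Cs CT \<alpha>)"
  then obtain \<alpha> where "ground_carg \<beta>" "tight_arg Lc Cs R CT Asm \<alpha>" "\<beta> \<in> c_inst Cs CT \<alpha>"
    by blast
  moreover from this have "\<beta> \<in> c_args Lc Cs R CT Asm"
    unfolding c_args_def by blast
  ultimately show "\<beta> \<in> gr_c_inst Cs CT (c_args Lc Cs R CT Asm)"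
    unfolding gr_c_inst_def using c_inst_refl by blast
qed

lemma ground_rule_of_rule_step:
  assumes "r \<in> R" "rule_step r a labs" and ground: "\<And>x. tvars (\<theta> x) = {}"
  obtains \<sigma> where "labs = (if snd r = [] then [None] else map (\<lambda>c. Some (asubst \<sigma> c)) (snd r))"
    and "(asubst \<theta> a, map (\<lambda>c. asubst \<theta> (asubst \<sigma> c)) (snd r)) \<in> ground_rules Cs R CT"
proof -
  obtain q xs ts \<sigma> where h: "fst r = Atm q (map Var xs)" and a: "a = Atm q ts"
    and len: "length ts = length xs" and \<sigma>: "\<forall>i<length xs. \<sigma> (xs ! i) = ts ! i"
    and labs: "labs = (if snd r = [] then [None] else map (\<lambda>c. Some (asubst \<sigma> c)) (snd r))"
    using assms(2) unfolding rule_step_def by blast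
  define \<sigma>' where "\<sigma>' = tsubst \<theta> \<circ> \<sigma>"
  have \<sigma>'_ground: "\<And>x. tvars (\<sigma>' x) = {}"
    by (simp add: \<sigma>'_def tvars_tsubst ground)
  have "asubst \<sigma>' (fst r) = asubst \<theta> a"
    using h a len \<sigma> by (auto simp: \<sigma>'_def intro!: nth_equalityI)
  then have "(asubst \<theta> a, map (asubst \<sigma>') (snd r)) \<in> ground_rules Cs R CT"
    unfolding ground_rules_def using \<open>r \<in> R\<close> ground_asubst[where \<sigma>=\<sigma>', OF \<sigma>'_ground]
    by (auto intro!: exI[of _ "fst r"] exI[of _ "snd r"] exI[of _ \<sigma>'])
  then show thesis
    using that labs by (simp add: \<sigma>'_def asubst_asubst)
qed

lemma aba_tree_of_ground_instance:
  assumes pcC: "pred_closed Cs" and pcA: "pred_closed Asm" and disj: "Cs \<inter> Asm = {}"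
    and ground: "\<And>x. tvars (\<theta> x) = {}"
  shows "tight_wf R Cs Asm T \<Longrightarrow> (\<forall>c\<in>dleaves T \<inter> Cs. ct_entails CT (asubst \<theta> c)) \<Longrightarrow>
    \<exists>T'. aba_wf (ground_rules Cs R CT) (ground_asms Asm) T' \<and>
      dleaves T' = asubst \<theta> ` (dleaves T \<inter> Asm) \<and> dlabel T' = map_option (asubst \<theta>) (dlabel T)"
proof (induction T)
  case DTrue
  then show ?case by (intro exI[of _ DTrue]) auto
next
  case (DLeaf a)
  show ?case
  proof (cases "a \<in> Cs")
    case True
    let ?c = "asubst \<theta> a"
    have "(?c, []) \<in> ground_rules Cs R CT"
      using True DLeaf.prems pcC unfolding ground_rules_def
      by (auto simp: pred_closed_asubst_iff ground_asubst[OF ground])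
    then show ?thesis using True disj
      by (intro exI[of _ "DNode ?c (?c, []) [DTrue]"]) auto
  next
    case False
    then have "a \<in> Asm" using DLeaf.prems by auto
    then show ?thesis
      by (intro exI[of _ "DLeaf (asubst \<theta> a)"])
         (auto simp: ground_asms_def pred_closed_asubst_iff[OF pcA] ground_asubst[OF ground])
  qed
next
  case (DNode a r ts)
  let ?grounding = "\<lambda>t T'. aba_wf (ground_rules Cs R CT) (ground_asms Asm) T' \<and>
    dleaves T' = asubst \<theta> ` (dleaves t \<inter> Asm) \<and> dlabel T' = map_option (asubst \<theta>) (dlabel t)"
  have "\<forall>t\<in>set ts. \<exists>T'. ?grounding t T'"
  proof
    fix t assume "t \<in> set ts"
    with DNode.IH[OF this] DNode.prems show "\<exists>T'. ?grounding t T'" by auto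
  qed
  then obtain f where f: "\<And>t. t \<in> set ts \<Longrightarrow> ?grounding t (f t)"
    by metis
  have "r \<in> R" "rule_step r a (map dlabel ts)" using DNode.prems by auto
  then obtain \<sigma> where labels: "map dlabel ts =
      (if snd r = [] then [None] else map (\<lambda>c. Some (asubst \<sigma> c)) (snd r))"
    and ground_rule: "(asubst \<theta> a, map (\<lambda>c. asubst \<theta> (asubst \<sigma> c)) (snd r)) \<in> ground_rules Cs R CT"
    by (rule ground_rule_of_rule_step[OF _ _ ground])
  define r' where "r' = (asubst \<theta> a, map (\<lambda>c. asubst \<theta> (asubst \<sigma> c)) (snd r))"
  have "map dlabel (map f ts) = map (map_option (asubst \<theta>)) (map dlabel ts)"
    using f by auto
  then have "map dlabel (map f ts) = (if snd r' = [] then [None] else map Some (snd r'))"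
    unfolding labels by (simp add: r'_def)
  then have "aba_wf (ground_rules Cs R CT) (ground_asms Asm) (DNode (asubst \<theta> a) r' (map f ts))"
    using ground_rule f by (simp add: r'_def)
  moreover have "dleaves (DNode (asubst \<theta> a) r' (map f ts)) =
      asubst \<theta> ` (dleaves (DNode a r ts) \<inter> Asm)"
    using f by auto
  ultimately show ?case
    by (intro exI[of _ "DNode (asubst \<theta> a) r' (map f ts)"]) simp
qed

lemma arg_c_of_ground_c_inst:
  assumes pcC: "pred_closed Cs" and pcA: "pred_closed Asm" and disj: "Cs \<inter> Asm = {}"
    and tight: "tight_arg Lc Cs R CT Asm \<alpha>" and inst: "(C, A, Rs, s) \<in> c_inst Cs CT \<alpha>"
    and ground: "ground_carg (C, A, Rs, s)"
  shows "\<exists>Rs'. (A, Rs', s) \<in> arg_c Cs R CT Asm"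
proof -
  obtain C0 A0 Rs0 s0 where \<alpha>: "\<alpha> = (C0, A0, Rs0, s0)" by (cases \<alpha>)
  obtain T where T: "tight_wf R Cs Asm T" "dlabel T = Some s0" "C0 = dleaves T \<inter> Cs"
      "A0 = dleaves T \<inter> Asm"
    using tight unfolding tight_arg_def \<alpha> by auto
  obtain \<theta> D where C: "C = asubst \<theta> ` C0 \<union> D" and A: "A = asubst \<theta> ` A0"
      and s: "s = asubst \<theta> s0" and cons: "ct_consistent CT C"
    using inst unfolding c_inst_def \<alpha> by auto
  \<comment> \<open>closes off the variables that the instance leaves open\<close>
  define \<theta>g where "\<theta>g = tsubst (\<lambda>_. Fn undefined []) \<circ> \<theta>"
  have \<theta>g_ground: "\<And>x. tvars (\<theta>g x) = {}"
    unfolding \<theta>g_def by (simp add: tvars_tsubst)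
  have \<theta>g_agrees: "asubst \<theta>g c = asubst \<theta> c" if "ground_atm (asubst \<theta> c)" for c
    using asubst_ground[OF that] by (simp add: \<theta>g_def flip: asubst_asubst)
  have "\<forall>c\<in>dleaves T \<inter> Cs. ct_entails CT (asubst \<theta>g c)"
  proof
    fix c assume "c \<in> dleaves T \<inter> Cs"
    then have c: "asubst \<theta> c \<in> C" using T(3) C by auto
    moreover have "ground_atm (asubst \<theta> c)" using c ground by (auto simp: ground_carg_def)
    ultimately show "ct_entails CT (asubst \<theta>g c)"
      using ct_entails_if_consistent[OF cons] \<theta>g_agrees by metis
  qed
  then obtain T' where T': "aba_wf (ground_rules Cs R CT) (ground_asms Asm) T'"
      "dleaves T' = asubst \<theta>g ` (dleaves T \<inter> Asm)" "dlabel T' = map_option (asubst \<theta>g) (dlabel T)"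
    using aba_tree_of_ground_instance[where \<theta>=\<theta>g, OF pcC pcA disj \<theta>g_ground T(1)]
    by blast
  have "\<And>c. c \<in> A0 \<Longrightarrow> ground_atm (asubst \<theta> c)"
    using ground A by (auto simp: ground_carg_def)
  then have "dleaves T' = A"
    unfolding T'(2) A T(4)[symmetric] using \<theta>g_agrees by (intro image_cong) auto
  moreover have "ground_atm (asubst \<theta> s0)"
    using ground s by (simp add: ground_carg_def)
  then have "dlabel T' = Some s"
    using T'(3) T(2) s \<theta>g_agrees by simp
  ultimately show ?thesis
    using T'(1) unfolding arg_c_def aba_args_def by force
qed

definition renamed_apart_within :: "'v set \<Rightarrow> (('p,'f,'v) atm, 'r) dtree \<Rightarrow> bool" where
  "renamed_apart_within U T \<longleftrightarrow> (\<forall>S\<in>set (dintros T). S \<subseteq> U) \<and> sorted_wrt disjnt (dintros T)"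

lemma renamed_apart_if_within:
  assumes "renamed_apart_within U T" "disjnt (lvars (dlabel T)) U"
  shows "renamed_apart T"
proof -
  let ?I = "dintros T"
  have "disjnt (?I ! i) (?I ! j)" if "i < length ?I" "j < length ?I" "i \<noteq> j" for i j
    using that assms(1) sorted_wrt_nth_less[of disjnt ?I] disjnt_sym
    unfolding renamed_apart_within_def by (metis linorder_neqE_nat)
  moreover have "disjnt (?I ! i) (lvars (dlabel T))" if "i < length ?I" for i
    using that assms nth_mem[OF that] unfolding renamed_apart_within_def
    by (meson disjnt_subset1 disjnt_sym)
  ultimately show ?thesis
    unfolding renamed_apart_def Let_def disjnt_def by blast
qed

lemma sorted_wrt_disjnt_concat:
  assumes "\<And>i. i < length Ss \<Longrightarrow> sorted_wrt disjnt (Ss ! i)"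
    and "\<And>i S. i < length Ss \<Longrightarrow> S \<in> set (Ss ! i) \<Longrightarrow> S \<subseteq> U i"
    and "\<And>i j. i < length Ss \<Longrightarrow> j < length Ss \<Longrightarrow> i \<noteq> j \<Longrightarrow> disjnt (U i) (U j)"
  shows "sorted_wrt disjnt (concat Ss)"
  using assms
proof (induction Ss arbitrary: U)
  case (Cons S Ss)
  have "sorted_wrt disjnt (concat Ss)"
  proof (rule Cons.IH[where U="U \<circ> Suc"])
    show "sorted_wrt disjnt (Ss ! i)" if "i < length Ss" for i
      using that Cons.prems(1)[of "Suc i"] by simp
    show "S' \<subseteq> (U \<circ> Suc) i" if "i < length Ss" "S' \<in> set (Ss ! i)" for i S'
      using that Cons.prems(2)[of "Suc i"] by simp
    show "disjnt ((U \<circ> Suc) i) ((U \<circ> Suc) j)" if "i < length Ss" "j < length Ss" "i \<noteq> j" for i j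
      using that Cons.prems(3)[of "Suc i" "Suc j"] by simp
  qed
  moreover have "disjnt X Y" if X: "X \<in> set S" and Y: "Y \<in> set (concat Ss)" for X Y
  proof -
    from Y obtain Z where "Z \<in> set Ss" "Y \<in> set Z" by auto
    then obtain j where j: "j < length Ss" "Y \<in> set (Ss ! j)" by (metis in_set_conv_nth)
    then have "Y \<subseteq> U (Suc j)" using Cons.prems(2)[of "Suc j"] by simp
    moreover have "X \<subseteq> U 0" using Cons.prems(2)[of 0] X by simp
    moreover have "disjnt (U 0) (U (Suc j))" using Cons.prems(3)[of 0 "Suc j"] j(1) by simp
    ultimately show ?thesis by (meson disjnt_subset1 disjnt_subset2)
  qed
  ultimately show ?case using Cons.prems(1)[of 0] by (simp add: sorted_wrt_append)
qed simp

lemma renamed_apart_within_DNode: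
  assumes intro: "\<Union> (set (map (lvars \<circ> dlabel) ts)) - avars a \<subseteq> N"
    and children: "\<And>i. i < length ts \<Longrightarrow> renamed_apart_within (U i) (ts ! i)"
    and disj: "\<And>i j. i < length ts \<Longrightarrow> j < length ts \<Longrightarrow> i \<noteq> j \<Longrightarrow> disjnt (U i) (U j)"
      "\<And>i. i < length ts \<Longrightarrow> disjnt N (U i)"
    and sub: "N \<union> (\<Union>i<length ts. U i) \<subseteq> U'"
  shows "renamed_apart_within U' (DNode a r ts)"
proof -
  have concat: "sorted_wrt disjnt (concat (map dintros ts))"
    using children disj(1) unfolding renamed_apart_within_def
    by (intro sorted_wrt_disjnt_concat[where U=U]) auto
  have within: "\<exists>i<length ts. S \<subseteq> U i" if "S \<in> set (concat (map dintros ts))" for S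
  proof -
    from that obtain t where "t \<in> set ts" "S \<in> set (dintros t)" by auto
    moreover from this obtain i where "i < length ts" "t = ts ! i" by (metis in_set_conv_nth)
    ultimately show ?thesis using children unfolding renamed_apart_within_def by blast
  qed
  have "disjnt (\<Union> (set (map (lvars \<circ> dlabel) ts)) - avars a) S"
    if "S \<in> set (concat (map dintros ts))" for S
    using within[OF that] intro disj(2) by (meson disjnt_subset1 disjnt_subset2)
  moreover have "S \<subseteq> U'" if "S \<in> set (concat (map dintros ts))" for S
    using within[OF that] sub by blast
  ultimately show ?thesis
    unfolding renamed_apart_within_def using concat intro sub by auto
qed

(* v (p, k) is the k-th fresh variable of the node with address p (the list of child
   indices leading to it from the root). *)
definition subtree_vars :: "(nat list \<times> nat \<Rightarrow> 'v) \<Rightarrow> nat list \<Rightarrow> 'v set" where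
  "subtree_vars v p = v ` {(p @ q, k) | q k. True}"

lemma range_curry_subset_subtree_vars: "range (curry v p) \<subseteq> subtree_vars v p"
  unfolding subtree_vars_def by (auto intro!: image_eqI[where x="(p @ [], _)"])

lemma subtree_vars_snoc_subset: "subtree_vars v (p @ [i]) \<subseteq> subtree_vars v p"
  unfolding subtree_vars_def by force

lemma disjnt_range_curry_subtree_vars:
  "inj v \<Longrightarrow> disjnt (range (curry v p)) (subtree_vars v (p @ [i]))"
  unfolding subtree_vars_def disjnt_def by (auto dest: injD)

lemma disjnt_subtree_vars_snoc:
  "inj v \<Longrightarrow> i \<noteq> j \<Longrightarrow> disjnt (subtree_vars v (p @ [i])) (subtree_vars v (p @ [j]))"
  unfolding subtree_vars_def disjnt_def by (auto dest: injD)

lemma obtain_patched_fun: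
  assumes "\<And>i j. i < n \<Longrightarrow> j < n \<Longrightarrow> i \<noteq> j \<Longrightarrow> disjnt (U i) (U j)"
  obtains f where "\<And>i x. i < n \<Longrightarrow> x \<in> U i \<Longrightarrow> f x = g i x"
    and "\<And>x. x \<notin> (\<Union>i<n. U i) \<Longrightarrow> f x = h x"
proof
  define f where "f x = (if \<exists>i<n. x \<in> U i then g (SOME i. i < n \<and> x \<in> U i) x else h x)" for x
  show "f x = g i x" if "i < n" "x \<in> U i" for i x
  proof -
    have "(SOME j. j < n \<and> x \<in> U j) = i"
      using that assms by (intro some_equality) (auto simp: disjnt_def)
    then show ?thesis using that by (auto simp: f_def)
  qed
  show "f x = h x" if "x \<notin> (\<Union>i<n. U i)" for x
    using that by (auto simp: f_def)
qed

(* \<theta> maps T' back onto the ground tree T; the constraint leaves of T' stand for the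
   fact nodes c <- of T. *)
definition lifting :: "('p,'f,'v) rule set \<Rightarrow> ('p,'f,'v) atm set \<Rightarrow> ('p,'f,'v) atm set
    \<Rightarrow> ('p,'f,'d) model set \<Rightarrow> 'v set \<Rightarrow> ('v \<Rightarrow> ('f,'v) trm) \<Rightarrow> ('p,'f,'v) atm
    \<Rightarrow> (('p,'f,'v) atm, ('p,'f,'v) rule) dtree \<Rightarrow> (('p,'f,'v) atm, ('p,'f,'v) rule) dtree
    \<Rightarrow> ('v \<Rightarrow> ('f,'v) trm) \<Rightarrow> bool" where
  "lifting R Cs Asm CT U \<theta>0 a T T' \<theta> \<longleftrightarrow>
     dlabel T' = Some a \<and> tight_wf R Cs Asm T' \<and> renamed_apart_within U T' \<and>
     (\<forall>x. x \<notin> U \<longrightarrow> \<theta> x = \<theta>0 x) \<and> asubst \<theta> ` (dleaves T' \<inter> Asm) = dleaves T \<and>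
     (\<forall>c\<in>dleaves T' \<inter> Cs. ground_atm (asubst \<theta> c) \<and> ct_entails CT (asubst \<theta> c))"

(* A leaf of the i-th child mentions only fresh variables of that child and variables in X,
   on which every \<theta>s i agrees with \<theta>1. *)
lemma obtain_common_subst:
  assumes children: "\<And>i. i < n \<Longrightarrow> lifting R Cs Asm CT (U i) \<theta>1 (la i) (ts ! i) (Ts ! i) (\<theta>s i)"
    and child_vars: "\<And>i. i < n \<Longrightarrow> avars (la i) \<subseteq> X"
    and disj: "\<And>i j. i < n \<Longrightarrow> j < n \<Longrightarrow> i \<noteq> j \<Longrightarrow> disjnt (U i) (U j)"
      "\<And>i. i < n \<Longrightarrow> disjnt X (U i)"
  obtains \<theta> where "\<And>i c. i < n \<Longrightarrow> c \<in> dleaves (Ts ! i) \<Longrightarrow> asubst \<theta> c = asubst (\<theta>s i) c"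
    and "\<And>x. x \<notin> (\<Union>i<n. U i) \<Longrightarrow> \<theta> x = \<theta>1 x"
proof -
  obtain \<theta> where \<theta>_in: "\<And>i x. i < n \<Longrightarrow> x \<in> U i \<Longrightarrow> \<theta> x = \<theta>s i x"
    and \<theta>_out: "\<And>x. x \<notin> (\<Union>i<n. U i) \<Longrightarrow> \<theta> x = \<theta>1 x"
    using obtain_patched_fun[of n U \<theta>s \<theta>1] disj(1) by metis
  have "asubst \<theta> c = asubst (\<theta>s i) c" if i: "i < n" and c: "c \<in> dleaves (Ts ! i)" for i c
  proof (rule asubst_cong)
    fix x assume x: "x \<in> avars c"
    have "avars c \<subseteq> avars (la i) \<union> U i"
      using avars_dleaves_subset[OF c] children[OF i]
      unfolding lifting_def renamed_apart_within_def by auto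
    then consider "x \<in> U i" | "x \<in> X" "x \<notin> U i"
      using x child_vars[OF i] by blast
    then show "\<theta> x = \<theta>s i x"
    proof cases
      case 1
      then show ?thesis using \<theta>_in i by blast
    next
      case 2
      then have "x \<notin> (\<Union>j<n. U j)" using disj(2) by (auto simp: disjnt_def)
      then show ?thesis using \<theta>_out children[OF i] 2 unfolding lifting_def by simp
    qed
  qed
  then show thesis using that \<theta>_out by blast
qed

lemma lifting_DNode:
  assumes rule: "r' \<in> R" "rule_step r' a (map dlabel Ts)"
    and len: "length ts = length Ts"
    and children: "\<And>i. i < length Ts \<Longrightarrow> lifting R Cs Asm CT (U i) \<theta>1 (la i) (ts ! i) (Ts ! i) (\<theta>s i)"
    and child_vars: "\<And>i. i < length Ts \<Longrightarrow> avars (la i) \<subseteq> avars a \<union> N"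
    and \<theta>1: "\<And>x. x \<notin> N \<Longrightarrow> \<theta>1 x = \<theta>0 x"
    and disj: "\<And>i j. i < length Ts \<Longrightarrow> j < length Ts \<Longrightarrow> i \<noteq> j \<Longrightarrow> disjnt (U i) (U j)"
      "\<And>i. i < length Ts \<Longrightarrow> disjnt (avars a \<union> N) (U i)"
    and sub: "N \<union> (\<Union>i<length Ts. U i) \<subseteq> U'"
  shows "\<exists>\<theta>. lifting R Cs Asm CT U' \<theta>0 a (DNode g r ts) (DNode a r' Ts) \<theta>"
proof -
  let ?n = "length Ts"
  obtain \<theta> where agree: "\<And>i c. i < ?n \<Longrightarrow> c \<in> dleaves (Ts ! i) \<Longrightarrow> asubst \<theta> c = asubst (\<theta>s i) c"
    and \<theta>_out: "\<And>x. x \<notin> (\<Union>i<?n. U i) \<Longrightarrow> \<theta> x = \<theta>1 x"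
    using obtain_common_subst[OF children child_vars disj] by blast
  have child: "dlabel (Ts ! i) = Some (la i)" "tight_wf R Cs Asm (Ts ! i)"
    "renamed_apart_within (U i) (Ts ! i)"
    "asubst (\<theta>s i) ` (dleaves (Ts ! i) \<inter> Asm) = dleaves (ts ! i)"
    "\<And>c. c \<in> dleaves (Ts ! i) \<inter> Cs \<Longrightarrow> ground_atm (asubst (\<theta>s i) c) \<and> ct_entails CT (asubst (\<theta>s i) c)"
    if "i < ?n" for i
    using children[OF that] unfolding lifting_def by auto
  have "lifting R Cs Asm CT U' \<theta>0 a (DNode g r ts) (DNode a r' Ts) \<theta>"
    unfolding lifting_def
  proof (intro conjI)
    show "dlabel (DNode a r' Ts) = Some a" by simp
    show "tight_wf R Cs Asm (DNode a r' Ts)"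
      using rule child(2) by (auto simp: in_set_conv_nth)
    have "\<Union> (set (map (lvars \<circ> dlabel) Ts)) - avars a \<subseteq> N"
      using child(1) child_vars by (fastforce simp: in_set_conv_nth)
    then show "renamed_apart_within U' (DNode a r' Ts)"
      using child(3) disj sub by (intro renamed_apart_within_DNode[where U=U]) auto
    show "\<forall>x. x \<notin> U' \<longrightarrow> \<theta> x = \<theta>0 x"
    proof (intro allI impI)
      fix x assume "x \<notin> U'"
      then have "x \<notin> (\<Union>i<?n. U i)" "x \<notin> N" using sub by auto
      then show "\<theta> x = \<theta>0 x" using \<theta>_out \<theta>1 by simp
    qed
    have "asubst \<theta> ` (dleaves (DNode a r' Ts) \<inter> Asm) = (\<Union>i<?n. asubst \<theta> ` (dleaves (Ts ! i) \<inter> Asm))"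
      unfolding dleaves_DNode_nth by blast
    also have "\<dots> = (\<Union>i<?n. asubst (\<theta>s i) ` (dleaves (Ts ! i) \<inter> Asm))"
      using agree by (intro SUP_cong refl image_cong) auto
    also have "\<dots> = dleaves (DNode g r ts)"
      unfolding dleaves_DNode_nth len using child(4) by simp
    finally show "asubst \<theta> ` (dleaves (DNode a r' Ts) \<inter> Asm) = dleaves (DNode g r ts)" .
    show "\<forall>c\<in>dleaves (DNode a r' Ts) \<inter> Cs. ground_atm (asubst \<theta> c) \<and> ct_entails CT (asubst \<theta> c)"
    proof
      fix c assume "c \<in> dleaves (DNode a r' Ts) \<inter> Cs"
      then obtain i where "i < ?n" "c \<in> dleaves (Ts ! i)" "c \<in> Cs"
        unfolding dleaves_DNode_nth by blast
      then show "ground_atm (asubst \<theta> c) \<and> ct_entails CT (asubst \<theta> c)"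
        using agree child(5) by simp
    qed
  qed
  then show ?thesis by blast
qed

lemma lifting_DNode_subtree_vars:
  fixes v :: "nat list \<times> nat \<Rightarrow> 'v"
  assumes inj: "inj v" and hb: "(h, b) \<in> R"
    and step: "rule_step (h, b) a (map (\<lambda>c. Some (asubst \<sigma> c)) b)"
    and len: "length ts = length b"
    and children: "\<And>i. i < length b \<Longrightarrow>
      \<exists>T' \<theta>. lifting R Cs Asm CT (subtree_vars v (p @ [i])) \<theta>1 (asubst \<sigma> (b ! i)) (ts ! i) T' \<theta>"
    and body_vars: "\<And>c. c \<in> set b \<Longrightarrow> avars (asubst \<sigma> c) \<subseteq> avars a \<union> range (curry v p)"
    and \<theta>1: "\<And>x. x \<notin> range (curry v p) \<Longrightarrow> \<theta>1 x = \<theta>0 x"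
    and fresh_a: "disjnt (avars a) (subtree_vars v p)"
  shows "\<exists>T' \<theta>. lifting R Cs Asm CT (subtree_vars v p) \<theta>0 a (DNode g r ts) T' \<theta>"
proof -
  let ?n = "length b"
  obtain Tc \<theta>c where Tc: "\<And>i. i < ?n \<Longrightarrow>
      lifting R Cs Asm CT (subtree_vars v (p @ [i])) \<theta>1 (asubst \<sigma> (b ! i)) (ts ! i) (Tc i) (\<theta>c i)"
    using children by metis
  let ?Ts = "map Tc [0..<?n]"
  have "dlabel (Tc i) = Some (asubst \<sigma> (b ! i))" if "i < ?n" for i
    using Tc[OF that] unfolding lifting_def by blast
  then have "map dlabel ?Ts = map (\<lambda>c. Some (asubst \<sigma> c)) b"
    by (intro nth_equalityI) auto
  then have "rule_step (h, b) a (map dlabel ?Ts)"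
    using step by simp
  then have "\<exists>\<theta>. lifting R Cs Asm CT (subtree_vars v p) \<theta>0 a (DNode g r ts)
      (DNode a (h, b) ?Ts) \<theta>"
  proof (rule lifting_DNode[OF hb, where U="\<lambda>i. subtree_vars v (p @ [i])" and N="range (curry v p)"
        and la="\<lambda>i. asubst \<sigma> (b ! i)" and \<theta>s=\<theta>c])
    show "length ts = length ?Ts"
      using len by simp
    show "lifting R Cs Asm CT (subtree_vars v (p @ [i])) \<theta>1 (asubst \<sigma> (b ! i)) (ts ! i)
        (?Ts ! i) (\<theta>c i)" if "i < length ?Ts" for i
      using Tc that by simp
    show "avars (asubst \<sigma> (b ! i)) \<subseteq> avars a \<union> range (curry v p)"
      if "i < length ?Ts" for i
      using body_vars[OF nth_mem] that by simp
    show "\<theta>1 x = \<theta>0 x" if "x \<notin> range (curry v p)" for x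
      using \<theta>1 that .
    show "disjnt (subtree_vars v (p @ [i])) (subtree_vars v (p @ [j]))" if "i \<noteq> j" for i j
      using disjnt_subtree_vars_snoc[OF inj that] .
    show "disjnt (avars a \<union> range (curry v p)) (subtree_vars v (p @ [i]))" for i
      using disjnt_subset2[OF fresh_a subtree_vars_snoc_subset]
        disjnt_range_curry_subtree_vars[OF inj, of p i]
      unfolding disjnt_Un1 by blast
    show "range (curry v p) \<union> (\<Union>i<length ?Ts. subtree_vars v (p @ [i]))
        \<subseteq> subtree_vars v p"
      using range_curry_subset_subtree_vars[of v p] subtree_vars_snoc_subset[of v p] by auto
  qed
  then show ?thesis by blast
qed

lemma obtain_head_body_subst:
  assumes "distinct xs" "length xs = length ts" "disjnt Y (set xs)"
  obtains \<sigma> where "\<And>i. i < length xs \<Longrightarrow> \<sigma> (xs ! i) = ts ! i"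
    and "\<And>y. y \<in> Y \<Longrightarrow> \<sigma> y = Var (g y)"
proof -
  define \<sigma> where "\<sigma> y = (case map_of (zip xs ts) y of Some t \<Rightarrow> t | None \<Rightarrow> Var (g y))" for y
  have "\<sigma> (xs ! i) = ts ! i" if "i < length xs" for i
    using map_of_zip_nth[OF assms(2,1)] that assms(2) by (simp add: \<sigma>_def)
  moreover have "\<sigma> y = Var (g y)" if "y \<in> Y" for y
  proof -
    have "map_of (zip xs ts) y = None" using that assms(2,3) by (auto simp: disjnt_iff)
    then show ?thesis by (simp add: \<sigma>_def)
  qed
  ultimately show thesis using that by blast
qed

lemma rule_step_renaming:
  assumes head: "h = Atm q (map Var xs)"
    and a: "a = Atm q ts" and len: "length xs = length ts"
    and Y: "Y = \<Union> (set (map avars b)) - set xs"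
    and \<sigma>_head: "\<And>i. i < length xs \<Longrightarrow> \<sigma> (xs ! i) = ts ! i"
    and \<sigma>_body: "\<And>y. y \<in> Y \<Longrightarrow> \<sigma> y = Var (g y)"
    and g: "inj_on g Y" "disjnt (g ` Y) (avars a)"
  shows "rule_step (h, b) a (if b = [] then [None] else map (\<lambda>c. Some (asubst \<sigma> c)) b)"
    and "c \<in> set b \<Longrightarrow> avars (asubst \<sigma> c) \<subseteq> avars a \<union> g ` Y"
proof -
  have "\<forall>y\<in>Y. \<exists>z. \<sigma> y = Var z"
    using \<sigma>_body by auto
  moreover have "inj_on \<sigma> Y"
    using g(1) \<sigma>_body by (auto simp: inj_on_def)
  moreover have "(\<Union>y\<in>Y. tvars (\<sigma> y)) \<inter> avars a = {}"
    using \<sigma>_body g(2) by (auto simp: disjnt_def)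
  ultimately show "rule_step (h, b) a (if b = [] then [None] else map (\<lambda>c. Some (asubst \<sigma> c)) b)"
    unfolding rule_step_def Let_def Y
    by (intro exI[of _ q] exI[of _ xs] exI[of _ ts] exI[of _ \<sigma>]) (use head a len \<sigma>_head in auto)
next
  assume c: "c \<in> set b"
  show "avars (asubst \<sigma> c) \<subseteq> avars a \<union> g ` Y"
  proof
    fix x assume "x \<in> avars (asubst \<sigma> c)"
    then obtain y where y: "y \<in> avars c" "x \<in> tvars (\<sigma> y)" by (auto simp: avars_asubst)
    show "x \<in> avars a \<union> g ` Y"
    proof (cases "y \<in> set xs")
      case True
      then obtain i where "i < length xs" "y = xs ! i" by (metis in_set_conv_nth)
      then show ?thesis using y(2) \<sigma>_head[of i] len a nth_mem[of i ts] by auto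
    next
      case False
      then have "y \<in> Y" using y(1) c Y by auto
      then show ?thesis using y(2) \<sigma>_body by auto
    qed
  qed
qed

lemma obtain_extension_along_inj:
  assumes "inj_on g Y"
  obtains \<theta> where "\<And>y. y \<in> Y \<Longrightarrow> \<theta> (g y) = f y" and "\<And>x. x \<notin> g ` Y \<Longrightarrow> \<theta> x = \<theta>0 x"
proof -
  define \<theta> where "\<theta> x = (if x \<in> g ` Y then f (inv_into Y g x) else \<theta>0 x)" for x
  show thesis
    by (rule that[of \<theta>]) (auto simp: \<theta>_def assms)
qed

lemma rule_step_fresh_instance:
  fixes fresh :: "nat \<Rightarrow> 'v"
  assumes head: "h = Atm q (map Var xs)" "distinct xs"
    and inst: "asubst \<theta>0 a = asubst \<sigma>g h"
    and fresh: "inj fresh" "disjnt (range fresh) (avars a)"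
  obtains \<sigma> \<theta> where "rule_step (h, b) a (if b = [] then [None] else map (\<lambda>c. Some (asubst \<sigma> c)) b)"
    and "\<And>x. x \<notin> range fresh \<Longrightarrow> \<theta> x = \<theta>0 x"
    and "\<And>c. c \<in> set b \<Longrightarrow> asubst \<theta> (asubst \<sigma> c) = asubst \<sigma>g c"
    and "\<And>c. c \<in> set b \<Longrightarrow> avars (asubst \<sigma> c) \<subseteq> avars a \<union> range fresh"
proof -
  obtain ts where a: "a = Atm q ts" and ts: "map (tsubst \<theta>0) ts = map \<sigma>g xs"
    using inst head by (cases a) auto
  then have len: "length xs = length ts" by (metis length_map)
  define Y where "Y = \<Union> (set (map avars b)) - set xs"
  have "finite Y" by (auto simp: Y_def finite_avars)
  then obtain idx :: "'v \<Rightarrow> nat" where "inj_on idx Y"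
    using finite_imp_inj_to_nat_seg by blast
  define g where "g = fresh \<circ> idx"
  have g: "inj_on g Y" "g ` Y \<subseteq> range fresh"
    using fresh(1) \<open>inj_on idx Y\<close> by (auto simp: g_def inj_on_def dest: injD)
  have g_fresh: "disjnt (g ` Y) (avars a)"
    using disjnt_subset1[OF fresh(2) g(2)] .
  obtain \<sigma> where \<sigma>_head: "\<And>i. i < length xs \<Longrightarrow> \<sigma> (xs ! i) = ts ! i"
    and \<sigma>_body: "\<And>y. y \<in> Y \<Longrightarrow> \<sigma> y = Var (g y)"
    using obtain_head_body_subst[OF head(2) len, of Y g] by (auto simp: Y_def disjnt_def)
  note renaming = rule_step_renaming[OF head(1) a len Y_def \<sigma>_head \<sigma>_body g(1) g_fresh]
  obtain \<theta> where \<theta>_g: "\<And>y. y \<in> Y \<Longrightarrow> \<theta> (g y) = \<sigma>g y"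
    and \<theta>_out: "\<And>x. x \<notin> g ` Y \<Longrightarrow> \<theta> x = \<theta>0 x"
    using obtain_extension_along_inj[OF g(1)] by blast
  have "asubst \<theta> (asubst \<sigma> c) = asubst \<sigma>g c" if c: "c \<in> set b" for c
    unfolding asubst_asubst
  proof (rule asubst_cong)
    fix y assume y: "y \<in> avars c"
    show "(tsubst \<theta> \<circ> \<sigma>) y = \<sigma>g y"
    proof (cases "y \<in> set xs")
      case True
      then obtain i where i: "i < length xs" "y = xs ! i" by (metis in_set_conv_nth)
      have "ts ! i \<in> set ts" using i len by simp
      then have "tsubst \<theta> (ts ! i) = tsubst \<theta>0 (ts ! i)"
        using a \<theta>_out g(2) fresh(2) by (intro tsubst_cong) (auto simp: disjnt_def)
      also have "\<dots> = \<sigma>g (xs ! i)" using ts i len by (metis nth_map)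
      finally show ?thesis using i \<sigma>_head by simp
    next
      case False
      then have "y \<in> Y" using y c by (auto simp: Y_def)
      then show ?thesis by (simp add: \<sigma>_body \<theta>_g)
    qed
  qed
  then show thesis
    using that renaming \<theta>_out g(2) by blast
qed

lemma fresh_copy_of_ground_rule:
  fixes v :: "nat list \<times> nat \<Rightarrow> 'v"
  assumes inj: "inj v" and normalised: "\<forall>r\<in>R. normalised Cs r"
    and r: "r \<in> ground_rules Cs R CT" "fst r = asubst \<theta>0 a" "fst r \<notin> Cs"
    and fresh_a: "disjnt (avars a) (subtree_vars v p)"
  obtains h b \<theta>1 \<sigma> where "(h, b) \<in> R" "snd r = map (\<lambda>c. asubst \<theta>1 (asubst \<sigma> c)) b"
    and "rule_step (h, b) a (if b = [] then [None] else map (\<lambda>c. Some (asubst \<sigma> c)) b)"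
    and "\<And>x. x \<notin> range (curry v p) \<Longrightarrow> \<theta>1 x = \<theta>0 x"
    and "\<And>c. c \<in> set b \<Longrightarrow> avars (asubst \<sigma> c) \<subseteq> avars a \<union> range (curry v p)"
proof -
  obtain h b \<sigma>g where hb: "(h, b) \<in> R" and r_eq: "r = (asubst \<sigma>g h, map (asubst \<sigma>g) b)"
    using ground_rule_with_rule_head[OF r(1,3)] by blast
  have "normalised Cs (h, b)" using normalised hb by blast
  then obtain q xs where h: "h = Atm q (map Var xs)" "distinct xs"
    unfolding normalised_def by auto
  have "inj (curry v p)"
    using inj by (auto simp: inj_def)
  moreover have "disjnt (range (curry v p)) (avars a)"
    using disjnt_subset2[OF fresh_a range_curry_subset_subtree_vars] by (rule disjnt_sym)
  moreover have "asubst \<theta>0 a = asubst \<sigma>g h"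
    using r(2) r_eq by simp
  ultimately obtain \<sigma> \<theta>1
    where "rule_step (h, b) a (if b = [] then [None] else map (\<lambda>c. Some (asubst \<sigma> c)) b)"
      and "\<And>x. x \<notin> range (curry v p) \<Longrightarrow> \<theta>1 x = \<theta>0 x"
      and body_inst: "\<And>c. c \<in> set b \<Longrightarrow> asubst \<theta>1 (asubst \<sigma> c) = asubst \<sigma>g c"
      and "\<And>c. c \<in> set b \<Longrightarrow> avars (asubst \<sigma> c) \<subseteq> avars a \<union> range (curry v p)"
    using rule_step_fresh_instance[OF h] by blast
  moreover have "snd r = map (\<lambda>c. asubst \<theta>1 (asubst \<sigma> c)) b"
    using r_eq body_inst by simp
  ultimately show thesis
    using that hb by blast
qed

lemma lifting_exists:
  fixes v :: "nat list \<times> nat \<Rightarrow> 'v"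
  assumes inj: "inj v" and pcC: "pred_closed Cs" and pcA: "pred_closed Asm"
    and disj: "Cs \<inter> Asm = {}" and rules: "\<forall>r\<in>R. fst r \<notin> Cs \<and> normalised Cs r"
  shows "aba_wf (ground_rules Cs R CT) (ground_asms Asm) T \<Longrightarrow> dlabel T = Some (asubst \<theta>0 a) \<Longrightarrow>
    disjnt (avars a) (subtree_vars v p) \<Longrightarrow>
    \<exists>T' \<theta>. lifting R Cs Asm CT (subtree_vars v p) \<theta>0 a T T' \<theta>"
proof (induction T arbitrary: a \<theta>0 p)
  case DTrue
  then show ?case by simp
next
  case (DLeaf g)
  then have "a \<in> Asm" by (auto simp: ground_asms_def pred_closed_asubst_iff[OF pcA])
  then show ?case using DLeaf disj
    by (intro exI[of _ "DLeaf a"] exI[of _ \<theta>0]) (auto simp: lifting_def renamed_apart_within_def)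
next
  case (DNode g r ts)
  have r: "r \<in> ground_rules Cs R CT" "fst r = asubst \<theta>0 a"
    and labels: "map dlabel ts = (if snd r = [] then [None] else map Some (snd r))"
    and wf: "\<forall>t\<in>set ts. aba_wf (ground_rules Cs R CT) (ground_asms Asm) t"
    using DNode.prems(1,2) by auto
  have normalised: "\<forall>r\<in>R. normalised Cs r"
    using rules by blast
  show ?case
  proof (cases "fst r \<in> Cs")
    case True
    then have "snd r = [] \<and> ground_atm (asubst \<theta>0 a) \<and> ct_entails CT (asubst \<theta>0 a)"
      using ground_rule_with_constraint_head[OF pcC _ r(1)] rules r(2) by auto
    moreover from this have "ts = [DTrue]" using labels map_dlabel_eq_None by simp
    moreover have "a \<in> Cs" using True r(2) pred_closed_asubst_iff[OF pcC] by simp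
    ultimately show ?thesis using disj
      by (intro exI[of _ "DLeaf a"] exI[of _ \<theta>0]) (auto simp: lifting_def renamed_apart_within_def)
  next
    case False
    obtain h b \<sigma> \<theta>1 where hb: "(h, b) \<in> R" and body: "snd r = map (\<lambda>c. asubst \<theta>1 (asubst \<sigma> c)) b"
      and step: "rule_step (h, b) a (if b = [] then [None] else map (\<lambda>c. Some (asubst \<sigma> c)) b)"
      and \<theta>1: "\<And>x. x \<notin> range (curry v p) \<Longrightarrow> \<theta>1 x = \<theta>0 x"
      and body_vars: "\<And>c. c \<in> set b \<Longrightarrow> avars (asubst \<sigma> c) \<subseteq> avars a \<union> range (curry v p)"
      by (rule fresh_copy_of_ground_rule[OF inj normalised r False DNode.prems(3)]) blast
    show ?thesis
    proof (cases "b = []")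
      case True
      then have "ts = [DTrue]" using labels body map_dlabel_eq_None by simp
      then show ?thesis using step True hb
        by (intro exI[of _ "DNode a (h, b) [DTrue]"] exI[of _ \<theta>0])
           (auto simp: lifting_def renamed_apart_within_def)
    next
      case False
      have ts_labels: "map dlabel ts = map (\<lambda>c. Some (asubst \<theta>1 (asubst \<sigma> c))) b"
        using labels body False by simp
      then have len: "length ts = length b" by (metis length_map)
      have children: "\<exists>T' \<theta>.
          lifting R Cs Asm CT (subtree_vars v (p @ [i])) \<theta>1 (asubst \<sigma> (b ! i)) (ts ! i) T' \<theta>"
        if i: "i < length b" for i
      proof (rule DNode.IH)
        show "ts ! i \<in> set ts" "aba_wf (ground_rules Cs R CT) (ground_asms Asm) (ts ! i)"
          using i len wf by auto
        show "dlabel (ts ! i) = Some (asubst \<theta>1 (asubst \<sigma> (b ! i)))"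
          using arg_cong[OF ts_labels, of "\<lambda>l. l ! i"] i len by simp
        have "disjnt (avars a \<union> range (curry v p)) (subtree_vars v (p @ [i]))"
          using disjnt_subset2[OF DNode.prems(3) subtree_vars_snoc_subset]
            disjnt_range_curry_subtree_vars[OF inj]
          by simp
        then show "disjnt (avars (asubst \<sigma> (b ! i))) (subtree_vars v (p @ [i]))"
          using body_vars[OF nth_mem[OF i]] by (rule disjnt_subset1)
      qed
      from step False have "rule_step (h, b) a (map (\<lambda>c. Some (asubst \<sigma> c)) b)"
        by simp
      from lifting_DNode_subtree_vars[OF inj hb this len children body_vars \<theta>1 DNode.prems(3)]
      show ?thesis .
    qed
  qed
qed

lemma ex_inj_nat_list_nat:
  assumes "infinite (UNIV :: 'v set)"
  obtains v :: "nat list \<times> nat \<Rightarrow> 'v" where "inj v"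
proof -
  obtain f :: "nat \<Rightarrow> 'v" where "inj f"
    using infinite_countable_subset[OF assms] by blast
  define u where "u = f \<circ> prod_encode \<circ> apfst list_encode"
  have "inj u"
  proof (rule injI)
    fix x y assume "u x = u y"
    then have "prod_encode (apfst list_encode x) = prod_encode (apfst list_encode y)"
      using \<open>inj f\<close> by (simp add: u_def inj_eq)
    then have "apfst list_encode x = apfst list_encode y"
      using inj_prod_encode[of UNIV] by (simp add: inj_eq)
    then show "x = y"
      using inj_list_encode[of UNIV] by (cases x; cases y) (simp add: inj_eq)
  qed
  then show thesis by (rule that)
qed

lemma ground_c_inst_of_lifting:
  assumes L: "lifting R Cs Asm CT U \<theta>0 s T T' \<theta>"
    and ground: "ground_atm s" "\<forall>a\<in>dleaves T. ground_atm a" and s: "s \<in> Lc - Cs"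
  shows "\<exists>\<alpha> C Rs. tight_arg Lc Cs R CT Asm \<alpha> \<and> (C, dleaves T, Rs, s) \<in> c_inst Cs CT \<alpha> \<and>
    ground_carg (C, dleaves T, Rs, s)"
proof -
  have T': "dlabel T' = Some s" "tight_wf R Cs Asm T'" "renamed_apart_within U T'"
      "asubst \<theta> ` (dleaves T' \<inter> Asm) = dleaves T"
    and C0: "\<And>c. c \<in> dleaves T' \<inter> Cs \<Longrightarrow> ground_atm (asubst \<theta> c) \<and> ct_entails CT (asubst \<theta> c)"
    using L unfolding lifting_def by auto
  define C0 where "C0 = dleaves T' \<inter> Cs"
  define A0 where "A0 = dleaves T' \<inter> Asm"
  have "finite C0" unfolding C0_def using finite_dleaves by auto
  then have cons: "ct_consistent CT (asubst \<theta> ` C0)"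
    using C0 by (intro ct_consistent_if_entails) (auto simp: C0_def)
  have "tight_arg Lc Cs R CT Asm (C0, A0, drules T', s)"
    unfolding tight_arg_def prod.case
  proof (intro exI[of _ T'] conjI)
    show "T' \<noteq> DTrue" using T'(1) by auto
    show "renamed_apart T'"
      using T'(1,3) ground(1) by (intro renamed_apart_if_within) (auto simp: ground_atm_def)
    show "ct_consistent CT C0"
      using cons \<open>finite C0\<close> by (rule ct_consistent_if_instance)
  qed (use T' s in \<open>simp_all add: C0_def A0_def\<close>)
  moreover have "(asubst \<theta> ` C0, dleaves T, drules T', s) \<in> c_inst Cs CT (C0, A0, drules T', s)"
    unfolding c_inst_def prod.case mem_Collect_eq
    using T'(4) cons asubst_ground[OF ground(1)]
    by (intro exI[of _ \<theta>] exI[of _ "{}"]) (simp add: A0_def)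
  moreover have "ground_carg (asubst \<theta> ` C0, dleaves T, drules T', s)"
    using C0 ground by (auto simp: ground_carg_def C0_def)
  ultimately show ?thesis by blast
qed

lemma ground_c_inst_of_arg_c:
  fixes A' :: "('p,'f,'v) atm set"
  assumes F: "caba_framework Lc Cs R CT Asm cp eqp" and inf: "infinite (UNIV :: 'v set)"
    and arg: "(A', Rs', s') \<in> arg_c Cs R CT Asm" and s': "s' \<notin> Cs"
  shows "\<exists>\<alpha> C Rs. tight_arg Lc Cs R CT Asm \<alpha> \<and> (C, A', Rs, s') \<in> c_inst Cs CT \<alpha> \<and>
    ground_carg (C, A', Rs, s')"
proof -
  have pcL: "pred_closed Lc" and pcC: "pred_closed Cs" and pcA: "pred_closed Asm"
    and CL: "Cs \<subseteq> Lc" and AL: "Asm \<subseteq> Lc - Cs"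
    and rules: "\<forall>r\<in>R. fst r \<in> Lc - Cs \<and> normalised Cs r"
    using F unfolding caba_framework_def by auto
  obtain T where T: "aba_wf (ground_rules Cs R CT) (ground_asms Asm) T" "dlabel T = Some s'"
      "dleaves T = A'"
    using arg unfolding arg_c_def aba_args_def by auto
  have "ground_atm s'" "s' \<in> Lc"
    using aba_claim_ground_in_Lc[OF pcL CL _ _ T(1,2)] AL rules by auto
  obtain v :: "nat list \<times> nat \<Rightarrow> 'v" where "inj v"
    using ex_inj_nat_list_nat[OF inf] by blast
  moreover have "Cs \<inter> Asm = {}" "\<forall>r\<in>R. fst r \<notin> Cs \<and> normalised Cs r"
    using AL rules by auto
  moreover have "dlabel T = Some (asubst Var s')"
    using T(2) by (simp add: asubst_Var)
  moreover have "disjnt (avars s') (subtree_vars v [])"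
    using \<open>ground_atm s'\<close> by (simp add: ground_atm_def)
  ultimately obtain T' \<theta> where L: "lifting R Cs Asm CT (subtree_vars v []) Var s' T T' \<theta>"
    using lifting_exists[OF _ pcC pcA _ _ T(1)] by blast
  have "\<forall>a\<in>dleaves T. ground_atm a"
    using aba_wf_dleaves[OF T(1)] by (auto simp: ground_asms_def)
  moreover have "s' \<in> Lc - Cs"
    using \<open>s' \<in> Lc\<close> s' by blast
  ultimately show ?thesis
    using ground_c_inst_of_lifting[OF L \<open>ground_atm s'\<close>] T(3) by blast
qed

theorem theorem5p12:
  fixes Lc Cs Asm :: "('p,'f,'v) atm set"
    and R :: "('p,'f,'v) rule set"
    and CT :: "('p,'f,'d) model set"
    and cp :: "'p \<Rightarrow> 'p" and eqp :: 'p
  assumes "caba_framework Lc Cs R CT Asm cp eqp"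
    and "infinite (UNIV :: 'v set)"
  shows "(\<forall>(C, A, Rs, s) \<in> gr_c_inst Cs CT (c_args Lc Cs R CT Asm).
            \<exists>(A', Rs', s') \<in> arg_c Cs R CT Asm. eq_mod_gc CT A s A' s')
       \<and> (\<forall>(A', Rs', s') \<in> arg_c Cs R CT Asm. s' \<notin> Cs \<longrightarrow>
            (\<exists>(C, A, Rs, s) \<in> gr_c_inst Cs CT (c_args Lc Cs R CT Asm). eq_mod_gc CT A s A' s'))"
proof (intro conjI; clarify)
  have pcC: "pred_closed Cs" and pcA: "pred_closed Asm" and disj: "Cs \<inter> Asm = {}"
    using assms(1) unfolding caba_framework_def by auto
  {
    fix C A Rs s assume "(C, A, Rs, s) \<in> gr_c_inst Cs CT (c_args Lc Cs R CT Asm)"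
    then obtain \<alpha> where "tight_arg Lc Cs R CT Asm \<alpha>" "(C, A, Rs, s) \<in> c_inst Cs CT \<alpha>"
        "ground_carg (C, A, Rs, s)"
      using mem_gr_c_inst_c_args[OF pcC] by blast
    then obtain Rs' where "(A, Rs', s) \<in> arg_c Cs R CT Asm"
      using arg_c_of_ground_c_inst[OF pcC pcA disj] by blast
    then show "\<exists>(A', Rs', s') \<in> arg_c Cs R CT Asm. eq_mod_gc CT A s A' s'"
      using eq_mod_gc_refl by blast
  }
  {
    fix A' Rs' s' assume "(A', Rs', s') \<in> arg_c Cs R CT Asm" "s' \<notin> Cs"
    then obtain \<alpha> C Rs where "tight_arg Lc Cs R CT Asm \<alpha>" "(C, A', Rs, s') \<in> c_inst Cs CT \<alpha>"
        "ground_carg (C, A', Rs, s')"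
      using ground_c_inst_of_arg_c[OF assms] by blast
    then have "(C, A', Rs, s') \<in> gr_c_inst Cs CT (c_args Lc Cs R CT Asm)"
      using mem_gr_c_inst_c_args[OF pcC] by blast
    then show "\<exists>(C, A, Rs, s) \<in> gr_c_inst Cs CT (c_args Lc Cs R CT Asm). eq_mod_gc CT A s A' s'"
      using eq_mod_gc_refl by blast
  }
qed

end
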